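(* Let $(G,t)$ be a problem instance, $X$ a tidy modulator of $G$, $x\in X$, and $P$ a simple path in $G-X$ visiting vertices $v_1,v_2,v_3,v_4\in N_G(x)$ in this order. Let $C$ be the connected component of $G-(X\cup\{v_1,v_4\})$ containing the vertices of $P$ strictly between $v_1$ and $v_4$. If $N_G(C)\cap X$ is a limit-1 subset for $(G-v_2x,t)$, then $(G,t)$ has a solution if and only if $(G-v_2x,t)$ has a solution, where $G-v_2x$ denotes $G$ with the edge $v_2x$ deleted.
   Context: $\mathrm{tw}$ is treewidth. A solution for a problem instance $(G,t)$ is $S\subseteq V(G)$ with $|S|\le t$ and $\mathrm{tw}(G-S)\le 2$. A modulator of $G$ is $X$ with $\mathrm{tw}(G-X)\le 2$; tidy if also $\mathrm{tw}(G-(X\setminus\{y\}))\le 2$ for all $y\in X$. A set $Z$ is a limit-1 subset for $(G,t)$ if every solution $S$ for $(G,t)$ satisfies $|Z\setminus S|\le 1$. $N_G(C)$ is the set of vertices outside $C$ adjacent to $C$. *)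

theory Defs
  imports Main
begin

definition graph :: "'a set \<Rightarrow> 'a set set \<Rightarrow> bool" where
  "graph V E \<longleftrightarrow> finite V \<and>
     (\<forall>e\<in>E. \<exists>u v. e = {u, v} \<and> u \<noteq> v \<and> u \<in> V \<and> v \<in> V)"

definition reach_in :: "'a set set \<Rightarrow> 'a set \<Rightarrow> 'a \<Rightarrow> 'a \<Rightarrow> bool" where
  "reach_in E S u v \<longleftrightarrow> u \<in> S \<and> v \<in> S \<and>
     (u, v) \<in> {(a, b). {a, b} \<in> E \<and> a \<in> S \<and> b \<in> S}\<^sup>*"

definition connected_in :: "'a set set \<Rightarrow> 'a set \<Rightarrow> bool" where
  "connected_in E S \<longleftrightarrow> (\<forall>u\<in>S. \<forall>v\<in>S. reach_in E S u v)"

definition is_tree :: "'b set \<Rightarrow> 'b set set \<Rightarrow> bool" where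
  "is_tree N F \<longleftrightarrow> graph N F \<and> N \<noteq> {} \<and> connected_in F N \<and> card F = card N - 1"

definition tw_le :: "'a set \<Rightarrow> 'a set set \<Rightarrow> nat \<Rightarrow> bool" where
  "tw_le V E k \<longleftrightarrow> (\<exists>(N :: nat set) F (B :: nat \<Rightarrow> 'a set).
     is_tree N F \<and>
     (\<forall>i\<in>N. B i \<subseteq> V \<and> card (B i) \<le> k + 1) \<and>
     (\<forall>v\<in>V. \<exists>i\<in>N. v \<in> B i) \<and>
     (\<forall>e\<in>E. \<exists>i\<in>N. e \<subseteq> B i) \<and>
     (\<forall>v\<in>V. connected_in F {i\<in>N. v \<in> B i}))"

definition del_edges :: "'a set set \<Rightarrow> 'a set \<Rightarrow> 'a set set" where
  "del_edges E S = {e\<in>E. e \<inter> S = {}}"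

definition solution :: "'a set \<Rightarrow> 'a set set \<Rightarrow> nat \<Rightarrow> 'a set \<Rightarrow> bool" where
  "solution V E t S \<longleftrightarrow> S \<subseteq> V \<and> card S \<le> t \<and> tw_le (V - S) (del_edges E S) 2"

definition modulator :: "'a set \<Rightarrow> 'a set set \<Rightarrow> 'a set \<Rightarrow> bool" where
  "modulator V E X \<longleftrightarrow> X \<subseteq> V \<and> tw_le (V - X) (del_edges E X) 2"

definition tidy_modulator :: "'a set \<Rightarrow> 'a set set \<Rightarrow> 'a set \<Rightarrow> bool" where
  "tidy_modulator V E X \<longleftrightarrow> modulator V E X \<and>
     (\<forall>y\<in>X. tw_le (V - (X - {y})) (del_edges E (X - {y})) 2)"

definition limit1 :: "'a set \<Rightarrow> 'a set set \<Rightarrow> nat \<Rightarrow> 'a set \<Rightarrow> bool" where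
  "limit1 V E t Z \<longleftrightarrow> (\<forall>S. solution V E t S \<longrightarrow> card (Z - S) \<le> 1)"

definition nbhd :: "'a set \<Rightarrow> 'a set set \<Rightarrow> 'a set \<Rightarrow> 'a set" where
  "nbhd V E C = {v\<in>V - C. \<exists>c\<in>C. {c, v} \<in> E}"

definition component :: "'a set \<Rightarrow> 'a set set \<Rightarrow> 'a set \<Rightarrow> bool" where
  "component V E C \<longleftrightarrow> (\<exists>w\<in>V. C = {u. reach_in E V w u})"

definition simple_path :: "'a set \<Rightarrow> 'a set set \<Rightarrow> 'a list \<Rightarrow> bool" where
  "simple_path V E P \<longleftrightarrow> P \<noteq> [] \<and> distinct P \<and> set P \<subseteq> V \<and>
     (\<forall>i. Suc i < length P \<longrightarrow> {P ! i, P ! Suc i} \<in> E)"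

end

theory Submission
  imports Defs
begin

text \<open>Deleting an edge never increases treewidth, so every solution for \<open>G\<close> solves
\<open>G - v\<^sub>2x\<close>. Conversely let \<open>S\<close> solve \<open>G - v\<^sub>2x\<close>; we may assume \<open>x \<notin> S\<close>. By the limit-1
hypothesis \<open>S\<close> then contains all of \<open>N(C) \<inter> X\<close> except \<open>x\<close>, so in \<open>G - S\<close> the component \<open>C\<close> is
attached to the rest only through \<open>x\<close>, \<open>v\<^sub>1\<close> and \<open>v\<^sub>4\<close>.

If \<open>S\<close> meets \<open>C\<close>, exchange \<open>S \<inter> C\<close> for \<open>x\<close>. Now \<open>C\<close> hangs on \<open>{v\<^sub>1, v\<^sub>4}\<close> only, and both sides
of this separation stay of treewidth at most 2 after adding the edge \<open>v\<^sub>1v\<^sub>4\<close>: it appears when \<open>x\<close>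
is contracted onto \<open>v\<^sub>1\<close>, in \<open>G - (X - {x})\<close> (tidiness) on the side of \<open>C\<close> and in
\<open>G - v\<^sub>2x - S\<close> on the other side. A clique-sum of order at most 2 preserves treewidth 2.

If \<open>S\<close> misses \<open>C\<close>, then \<open>v\<^sub>1\<close> and \<open>v\<^sub>4\<close> are disconnected in \<open>G - S - C - x\<close>: otherwise \<open>{x}\<close>,
\<open>P[v\<^sub>1, v\<^sub>3)\<close>, \<open>P[v\<^sub>3, v\<^sub>4)\<close> and a \<open>v\<^sub>1\<close>-\<open>v\<^sub>4\<close> path avoiding \<open>C\<close> would be the branch sets of a
\<open>K\<^sub>4\<close>-minor of \<open>G - v\<^sub>2x - S\<close>. So \<open>G - S\<close> is glued along the edges \<open>xv\<^sub>1\<close> and \<open>xv\<^sub>4\<close> from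
\<open>C \<union> {x, v\<^sub>1, v\<^sub>4}\<close>, which lies in \<open>G - (X - {x})\<close>, and from two parts avoiding \<open>v\<^sub>2\<close>, which lie
in \<open>G - v\<^sub>2x - S\<close>.\<close>

section \<open>Reachability and connectivity\<close>

definition edge_rel :: "'a set set \<Rightarrow> 'a set \<Rightarrow> ('a \<times> 'a) set" where
  "edge_rel E S = {(a, b). {a, b} \<in> E \<and> a \<in> S \<and> b \<in> S}"

lemma reach_in_iff: "reach_in E S u v \<longleftrightarrow> u \<in> S \<and> v \<in> S \<and> (u, v) \<in> (edge_rel E S)\<^sup>*"
  unfolding reach_in_def edge_rel_def by simp

lemma reach_in_refl: "u \<in> S \<Longrightarrow> reach_in E S u u"
  by (simp add: reach_in_iff)

lemma reach_in_edge: "{a, b} \<in> E \<Longrightarrow> a \<in> S \<Longrightarrow> b \<in> S \<Longrightarrow> reach_in E S a b"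
  unfolding reach_in_iff edge_rel_def by auto

lemma reach_in_trans: "reach_in E S u v \<Longrightarrow> reach_in E S v w \<Longrightarrow> reach_in E S u w"
  unfolding reach_in_iff by auto

lemma reach_in_step: "reach_in E S u y \<Longrightarrow> {y, z} \<in> E \<Longrightarrow> z \<in> S \<Longrightarrow> reach_in E S u z"
  by (meson reach_in_edge reach_in_def reach_in_trans)

lemma reach_in_sym:
  assumes "reach_in E S u v"
  shows "reach_in E S v u"
proof -
  have "sym (edge_rel E S)" unfolding edge_rel_def sym_def by (auto simp: insert_commute)
  then have "sym ((edge_rel E S)\<^sup>*)" by (rule sym_rtrancl)
  then show ?thesis using assms unfolding reach_in_iff by (blast dest: symD)
qed

lemma reach_in_induct [consumes 1, case_names base step]:
  assumes "reach_in E S u v"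
    and "Q u"
    and "\<And>y z. reach_in E S u y \<Longrightarrow> {y, z} \<in> E \<Longrightarrow> y \<in> S \<Longrightarrow> z \<in> S \<Longrightarrow> Q y \<Longrightarrow> Q z"
  shows "Q v"
proof -
  from assms(1) have "(u, v) \<in> (edge_rel E S)\<^sup>*" "u \<in> S" by (auto simp: reach_in_iff)
  then have "reach_in E S u v \<and> Q v"
  proof (induction rule: rtrancl_induct)
    case base
    then show ?case using assms(2) by (auto intro: reach_in_refl)
  next
    case (step y z)
    then show ?case using assms(3) unfolding edge_rel_def by (auto intro: reach_in_step)
  qed
  then show ?thesis by simp
qed

lemma reach_in_map:
  assumes "reach_in E S u v"
    and "\<And>a b. {a, b} \<in> E \<Longrightarrow> a \<in> S \<Longrightarrow> b \<in> S \<Longrightarrow> {f a, f b} \<in> E'"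
    and "f ` S \<subseteq> S'"
  shows "reach_in E' S' (f u) (f v)"
  using assms(1)
proof (induction rule: reach_in_induct)
  case base
  then show ?case using assms(1,3) by (auto intro: reach_in_refl simp: reach_in_def)
next
  case (step y z)
  then show ?case using assms(2,3) by (blast intro: reach_in_step)
qed

lemma reach_in_mono_set: "reach_in E S u v \<Longrightarrow> S \<subseteq> S' \<Longrightarrow> reach_in E S' u v"
  using reach_in_map[of E S u v id E S'] by auto

lemma reach_in_first_step:
  assumes "reach_in E S a b" "a \<noteq> b"
  obtains c where "{a, c} \<in> E" "c \<in> S - {a}" "reach_in E (S - {a}) c b"
proof -
  have "b \<noteq> a \<longrightarrow> (\<exists>c. {a, c} \<in> E \<and> c \<in> S - {a} \<and> reach_in E (S - {a}) c b)"
    using assms(1)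
  proof (induction rule: reach_in_induct)
    case (step y z)
    show ?case
    proof (cases "y = a")
      case True
      then show ?thesis using step by (auto intro: reach_in_refl)
    next
      case False
      then show ?thesis using step by (meson DiffI reach_in_step singletonD)
    qed
  qed simp
  then show ?thesis using assms that by blast
qed

lemma reach_in_last_step:
  assumes "reach_in E S a b" "a \<noteq> b"
  obtains c where "c \<in> S" "{c, b} \<in> E"
proof -
  have "b \<noteq> a \<longrightarrow> (\<exists>c\<in>S. {c, b} \<in> E)"
    using assms(1) by (induction rule: reach_in_induct) auto
  then show ?thesis using assms that by blast
qed

lemma reach_in_class:
  assumes "reach_in E S w u"
  shows "reach_in E {z. reach_in E S w z} w u"
  using assms
proof (induction rule: reach_in_induct)
  case base
  then show ?case using assms by (auto intro: reach_in_refl simp: reach_in_def)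
next
  case (step y z)
  then show ?case by (auto intro: reach_in_step)
qed

lemma reach_class_closed:
  assumes "{a, b} \<in> E" "a \<in> {u. reach_in E S w u}" "b \<in> S"
  shows "b \<in> {u. reach_in E S w u}"
  using assms reach_in_step by fastforce

lemma connected_inD: "connected_in F S \<Longrightarrow> u \<in> S \<Longrightarrow> v \<in> S \<Longrightarrow> reach_in F S u v"
  unfolding connected_in_def by blast

lemma connected_inI_hub:
  assumes "\<And>u. u \<in> S \<Longrightarrow> reach_in F S u c"
  shows "connected_in F S"
  unfolding connected_in_def using assms reach_in_sym reach_in_trans by metis

lemma connected_in_Un:
  assumes "connected_in F S1" "connected_in F S2" "c \<in> S1" "c \<in> S2"
  shows "connected_in F (S1 \<union> S2)"
proof (rule connected_inI_hub)
  fix u assume "u \<in> S1 \<union> S2"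
  then have "reach_in F S1 u c \<or> reach_in F S2 u c"
    using assms by (meson UnE connected_inD)
  then show "reach_in F (S1 \<union> S2) u c"
    using reach_in_mono_set[of F _ u c "S1 \<union> S2"] by blast
qed

lemma connected_in_Un_edge:
  assumes "connected_in F S1" "connected_in F S2" "a \<in> S1" "b \<in> S2" "{a, b} \<in> F"
  shows "connected_in F (S1 \<union> S2)"
proof (rule connected_inI_hub)
  have ba: "reach_in F (S1 \<union> S2) b a"
    using assms(3-5) by (blast intro: reach_in_sym reach_in_edge)
  fix u assume "u \<in> S1 \<union> S2"
  then have "reach_in F S1 u a \<or> reach_in F S2 u b"
    using assms by (meson UnE connected_inD)
  then show "reach_in F (S1 \<union> S2) u a"
    using reach_in_mono_set[of F _ u _ "S1 \<union> S2"] reach_in_trans[OF _ ba] by blast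
qed

lemma connected_in_image:
  assumes "connected_in F S" "\<And>a b. {a, b} \<in> F \<Longrightarrow> a \<in> S \<Longrightarrow> b \<in> S \<Longrightarrow> {f a, f b} \<in> F'"
  shows "connected_in F' (f ` S)"
  unfolding connected_in_def
proof (intro ballI)
  fix u v assume "u \<in> f ` S" "v \<in> f ` S"
  then obtain u0 v0 where "u0 \<in> S" "v0 \<in> S" "u = f u0" "v = f v0" by blast
  then have "reach_in F S u0 v0" using assms(1) connected_inD by metis
  then have "reach_in F' (f ` S) (f u0) (f v0)" by (rule reach_in_map) (use assms(2) in auto)
  then show "reach_in F' (f ` S) u v" using \<open>u = f u0\<close> \<open>v = f v0\<close> by simp
qed

lemma connected_in_mono:
  assumes "connected_in F S" "\<And>a b. {a, b} \<in> F \<Longrightarrow> a \<in> S \<Longrightarrow> b \<in> S \<Longrightarrow> {a, b} \<in> F'"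
  shows "connected_in F' S"
  using connected_in_image[of F S id F'] assms by simp

lemma connected_in_reach_class: "connected_in E {u. reach_in E S w u}"
proof (rule connected_inI_hub)
  fix u assume "u \<in> {u. reach_in E S w u}"
  then show "reach_in E {u. reach_in E S w u} u w"
    by (simp add: reach_in_class reach_in_sym)
qed

lemma connected_in_path_segment:
  assumes "b \<le> length P" "\<And>k. a \<le> k \<Longrightarrow> Suc k < b \<Longrightarrow> {P ! k, P ! Suc k} \<in> F"
  shows "connected_in F {P ! k | k. a \<le> k \<and> k < b}"
    (is "connected_in F ?Y")
proof (cases "a < b")
  case True
  have "reach_in F ?Y (P ! k) (P ! a)" if "a \<le> k" "k < b" for k
    using that
  proof (induction k rule: dec_induct)
    case base
    then show ?case by (auto intro: reach_in_refl)
  next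
    case (step k)
    have "{P ! Suc k, P ! k} \<in> F" using assms(2) step by (simp add: insert_commute)
    moreover have "P ! k \<in> ?Y" using step by auto
    moreover have "P ! Suc k \<in> ?Y" using step by auto
    ultimately have "reach_in F ?Y (P ! Suc k) (P ! k)" by (blast intro: reach_in_edge)
    moreover have "reach_in F ?Y (P ! k) (P ! a)" using step.IH step.prems by simp
    ultimately show ?case by (rule reach_in_trans)
  qed
  then show ?thesis by (intro connected_inI_hub[of _ _ "P ! a"]) blast
qed (auto simp: connected_in_def)


section \<open>Trees\<close>

lemma graph_finite_edges:
  assumes "graph N F"
  shows "finite F"
proof -
  have "F \<subseteq> Pow N" "finite N" using assms unfolding graph_def by auto
  then show ?thesis by (meson finite_Pow_iff finite_subset)
qed

lemma graph_edgeE: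
  assumes "graph N F" "e \<in> F"
  obtains u v where "e = {u, v}" "u \<noteq> v" "u \<in> N" "v \<in> N"
  using assms unfolding graph_def by auto

definition graph_degree :: "'b set set \<Rightarrow> 'b \<Rightarrow> nat" where
  "graph_degree F v = card {e\<in>F. v \<in> e}"

lemma graph_degree_sum:
  assumes "graph N F"
  shows "(\<Sum>v\<in>N. graph_degree F v) = 2 * card F"
proof -
  have fN: "finite N" using assms unfolding graph_def by simp
  have fF: "finite F" using assms graph_finite_edges by auto
  have "(\<Sum>v\<in>N. graph_degree F v) = (\<Sum>v\<in>N. \<Sum>e\<in>F. if v \<in> e then 1 else 0)"
    using fF by (simp add: graph_degree_def sum.If_cases Int_def)
  also have "\<dots> = (\<Sum>e\<in>F. \<Sum>v\<in>N. if v \<in> e then 1 else 0)"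
    by (rule sum.swap)
  also have "\<dots> = (\<Sum>e\<in>F. 2)"
  proof (rule sum.cong)
    fix e assume "e \<in> F"
    then obtain u v where e: "e = {u, v}" "u \<noteq> v" "u \<in> N" "v \<in> N"
      using assms by (blast elim: graph_edgeE)
    have "(\<Sum>w\<in>N. if w \<in> e then 1 else 0) = card (N \<inter> e)"
      using fN by (simp add: sum.If_cases)
    also have "N \<inter> e = {u, v}" using e by auto
    finally show "(\<Sum>w\<in>N. if w \<in> e then 1 else (0::nat)) = 2" using e by simp
  qed simp
  finally show ?thesis by simp
qed

lemma connected_graph_degree_pos:
  assumes "graph N F" "connected_in F N" "v \<in> N" "w \<in> N" "w \<noteq> v"
  shows "0 < graph_degree F v"
proof -
  have "reach_in F N v w" using connected_inD[OF assms(2,3,4)] .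
  then obtain c where "{v, c} \<in> F"
    using assms(5) reach_in_first_step by metis
  then show ?thesis
    using graph_finite_edges[OF assms(1)] unfolding graph_degree_def by (auto simp: card_gt_0_iff)
qed

lemma tree_has_leaf:
  assumes "is_tree N F" "2 \<le> card N"
  obtains l p where "l \<in> N" "p \<in> N" "l \<noteq> p" "{l, p} \<in> F" "\<forall>e\<in>F. l \<in> e \<longrightarrow> e = {l, p}"
proof -
  have g: "graph N F" and con: "connected_in F N" and cF: "card F = card N - 1"
    using assms unfolding is_tree_def by auto
  have "\<exists>l\<in>N. graph_degree F l \<le> 1"
  proof (rule ccontr)
    assume "\<not> ?thesis"
    then have "\<forall>v\<in>N. 2 \<le> graph_degree F v" by auto
    then have "(\<Sum>v\<in>N. (2::nat)) \<le> (\<Sum>v\<in>N. graph_degree F v)" by (intro sum_mono) auto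
    then show False using graph_degree_sum[OF g] cF assms(2) by simp
  qed
  then obtain l where l: "l \<in> N" "graph_degree F l \<le> 1" by blast
  have "\<not> N \<subseteq> {l}"
  proof
    assume "N \<subseteq> {l}"
    then have "card N \<le> 1" using card_mono[of "{l}" N] by simp
    then show False using assms(2) by simp
  qed
  then obtain w where "w \<in> N" "w \<noteq> l" by blast
  then have "0 < graph_degree F l" by (rule connected_graph_degree_pos[OF g con l(1)])
  then have "graph_degree F l = 1" using l(2) by simp
  then obtain e0 where e0: "{e\<in>F. l \<in> e} = {e0}"
    unfolding graph_degree_def by (rule card_1_singletonE)
  then have "e0 \<in> F" "l \<in> e0" by auto
  then obtain u v where uv: "e0 = {u, v}" "u \<noteq> v" "u \<in> N" "v \<in> N"
    using graph_edgeE[OF g \<open>e0 \<in> F\<close>] by blast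
  define p where "p = (if u = l then v else u)"
  have p: "e0 = {l, p}" "l \<noteq> p" "p \<in> N" using uv \<open>l \<in> e0\<close> unfolding p_def by auto
  have "\<forall>e\<in>F. l \<in> e \<longrightarrow> e = {l, p}" using e0 p(1) by blast
  then show ?thesis using that[OF l(1) p(3) p(2)] \<open>e0 \<in> F\<close> p(1) by blast
qed

lemma reach_in_remove_leaf:
  assumes "reach_in F T u v" "u \<noteq> l"
    and leaf: "\<forall>e\<in>F. l \<in> e \<longrightarrow> e = {l, p}" "p \<noteq> l"
  shows "reach_in (F - {{l, p}}) (T - {l}) u (if v = l then p else v)"
  using assms(1)
proof (induction rule: reach_in_induct)
  case base
  then show ?case using assms(1,2) by (auto intro: reach_in_refl simp: reach_in_def)
next
  case (step y z)
  show ?case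
  proof (cases "z = l")
    case True
    then have "{y, l} = {l, p}" using step leaf by auto
    then have "y = p" using \<open>p \<noteq> l\<close> by (metis doubleton_eq_iff)
    then show ?thesis using step True \<open>p \<noteq> l\<close> by auto
  next
    case False
    show ?thesis
    proof (cases "y = l")
      case True
      then have "{l, z} = {l, p}" using step leaf by auto
      then have "z = p" using False by (metis doubleton_eq_iff)
      then show ?thesis using step True by auto
    next
      case False2: False
      then have "{y, z} \<noteq> {l, p}" using False by auto
      then show ?thesis using step False False2 by (auto intro: reach_in_step)
    qed
  qed
qed

lemma reach_in_leaf_neighbour:
  assumes "reach_in F T w l" "w \<noteq> l"
    and leaf: "\<forall>e\<in>F. l \<in> e \<longrightarrow> e = {l, p}" "p \<noteq> l"
  shows "p \<in> T"
proof -
  obtain c where "c \<in> T" "{c, l} \<in> F" using reach_in_last_step[OF assms(1,2)] by blast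
  then have "{c, l} = {l, p}" using leaf by auto
  then show ?thesis using \<open>c \<in> T\<close> \<open>p \<noteq> l\<close> by (metis doubleton_eq_iff)
qed

lemma connected_in_remove_leaf:
  assumes "connected_in F T" "\<forall>e\<in>F. l \<in> e \<longrightarrow> e = {l, p}" "p \<noteq> l"
  shows "connected_in (F - {{l, p}}) (T - {l})"
  unfolding connected_in_def
proof (intro ballI)
  fix u v assume "u \<in> T - {l}" "v \<in> T - {l}"
  then have "reach_in (F - {{l, p}}) (T - {l}) u (if v = l then p else v)"
    by (intro reach_in_remove_leaf[OF connected_inD[OF assms(1)] _ assms(2,3)]) auto
  then show "reach_in (F - {{l, p}}) (T - {l}) u v" using \<open>v \<in> T - {l}\<close> by simp
qed

lemma is_tree_remove_leaf:
  assumes "is_tree N F" "l \<in> N" "p \<in> N" "l \<noteq> p" "{l, p} \<in> F"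
    and leaf: "\<forall>e\<in>F. l \<in> e \<longrightarrow> e = {l, p}"
  shows "is_tree (N - {l}) (F - {{l, p}})"
proof -
  have g: "graph N F" and con: "connected_in F N" and cF: "card F = card N - 1"
    using assms unfolding is_tree_def by auto
  have fN: "finite N" using g unfolding graph_def by simp
  have "graph (N - {l}) (F - {{l, p}})"
    unfolding graph_def
  proof (intro conjI ballI)
    fix e assume e: "e \<in> F - {{l, p}}"
    then obtain u v where "e = {u, v}" "u \<noteq> v" "u \<in> N" "v \<in> N" using g by (blast elim: graph_edgeE)
    moreover have "l \<notin> e" using e leaf by auto
    ultimately show "\<exists>u v. e = {u, v} \<and> u \<noteq> v \<and> u \<in> N - {l} \<and> v \<in> N - {l}" by auto
  qed (use fN in simp)
  moreover have "card (F - {{l, p}}) = card (N - {l}) - 1"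
    using assms(2,5) cF graph_finite_edges[OF g] fN by simp
  moreover have "connected_in (F - {{l, p}}) (N - {l})"
    using connected_in_remove_leaf[OF con leaf] assms(4) by simp
  ultimately show ?thesis unfolding is_tree_def using assms(3,4) by auto
qed

lemma subtree_remove_leaf:
  assumes "connected_in F T" "T \<noteq> {}" "T \<noteq> {l}"
    and leaf: "\<forall>e\<in>F. l \<in> e \<longrightarrow> e = {l, p}" "p \<noteq> l"
  shows "T - {l} \<noteq> {}" "connected_in (F - {{l, p}}) (T - {l})" "l \<in> T \<Longrightarrow> p \<in> T"
proof -
  show "T - {l} \<noteq> {}" using assms(2,3) by blast
  show "connected_in (F - {{l, p}}) (T - {l})" using connected_in_remove_leaf[OF assms(1) leaf] .
  assume "l \<in> T"
  obtain w where "w \<in> T" "w \<noteq> l" using assms(2,3) by blast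
  then show "p \<in> T"
    using reach_in_leaf_neighbour[OF connected_inD[OF assms(1)] _ leaf] \<open>l \<in> T\<close> by blast
qed

lemma subtrees_remove_leaf:
  assumes subtrees: "\<forall>T\<in>TT. T \<noteq> {} \<and> T \<subseteq> N \<and> connected_in F T"
    and meet: "\<forall>T1\<in>TT. \<forall>T2\<in>TT. T1 \<inter> T2 \<noteq> {}"
    and "{l} \<notin> TT" and leaf: "\<forall>e\<in>F. l \<in> e \<longrightarrow> e = {l, p}" "p \<noteq> l"
  shows "\<forall>T\<in>(\<lambda>T. T - {l}) ` TT. T \<noteq> {} \<and> T \<subseteq> N - {l} \<and> connected_in (F - {{l, p}}) T"
    and "\<forall>T1\<in>(\<lambda>T. T - {l}) ` TT. \<forall>T2\<in>(\<lambda>T. T - {l}) ` TT. T1 \<inter> T2 \<noteq> {}"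
proof -
  have sub: "T - {l} \<noteq> {}" "connected_in (F - {{l, p}}) (T - {l})" "l \<in> T \<Longrightarrow> p \<in> T"
    if "T \<in> TT" for T
  proof -
    have "connected_in F T" "T \<noteq> {}" "T \<noteq> {l}" using subtrees that assms(3) by auto
    then show "T - {l} \<noteq> {}" "connected_in (F - {{l, p}}) (T - {l})" "l \<in> T \<Longrightarrow> p \<in> T"
      using subtree_remove_leaf[OF _ _ _ leaf] by auto
  qed
  show "\<forall>T\<in>(\<lambda>T. T - {l}) ` TT. T \<noteq> {} \<and> T \<subseteq> N - {l} \<and> connected_in (F - {{l, p}}) T"
  proof
    fix T' assume "T' \<in> (\<lambda>T. T - {l}) ` TT"
    then obtain T where "T \<in> TT" "T' = T - {l}" by blast
    then show "T' \<noteq> {} \<and> T' \<subseteq> N - {l} \<and> connected_in (F - {{l, p}}) T'"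
      using sub(1,2)[OF \<open>T \<in> TT\<close>] subtrees \<open>T \<in> TT\<close> by auto
  qed
  show "\<forall>T1\<in>(\<lambda>T. T - {l}) ` TT. \<forall>T2\<in>(\<lambda>T. T - {l}) ` TT. T1 \<inter> T2 \<noteq> {}"
  proof (intro ballI)
    fix T1' T2' assume "T1' \<in> (\<lambda>T. T - {l}) ` TT" "T2' \<in> (\<lambda>T. T - {l}) ` TT"
    then obtain T1 T2 where T: "T1 \<in> TT" "T2 \<in> TT" "T1' = T1 - {l}" "T2' = T2 - {l}" by blast
    obtain n where "n \<in> T1" "n \<in> T2" using meet T(1,2) by blast
    then show "T1' \<inter> T2' \<noteq> {}"
      using sub(3)[OF T(1)] sub(3)[OF T(2)] T leaf(2) by (cases "n = l") auto
  qed
qed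

lemma subtrees_Helly:
  assumes "is_tree N F"
    and "\<forall>T\<in>TT. T \<noteq> {} \<and> T \<subseteq> N \<and> connected_in F T"
    and "\<forall>T1\<in>TT. \<forall>T2\<in>TT. T1 \<inter> T2 \<noteq> {}"
  shows "\<exists>n\<in>N. \<forall>T\<in>TT. n \<in> T"
  using assms
proof (induction "card N" arbitrary: N F TT rule: less_induct)
  case less
  have g: "graph N F" and ne: "N \<noteq> {}" using less.prems(1) unfolding is_tree_def by auto
  have fN: "finite N" using g unfolding graph_def by simp
  show ?case
  proof (cases "card N \<le> 1")
    case True
    then have "card N = 1" using ne fN by (simp add: le_Suc_eq)
    then obtain n where "N = {n}" by (rule card_1_singletonE)
    then show ?thesis using less.prems(2) by auto
  next
    case False
    then have "2 \<le> card N" by simp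
    then obtain l p where lp: "l \<in> N" "p \<in> N" "l \<noteq> p" "{l, p} \<in> F"
      and leaf: "\<forall>e\<in>F. l \<in> e \<longrightarrow> e = {l, p}"
      by (rule tree_has_leaf[OF less.prems(1)])
    show ?thesis
    proof (cases "{l} \<in> TT")
      case True
      then have "l \<in> T" if "T \<in> TT" for T using less.prems(3) that by blast
      then show ?thesis using lp(1) by blast
    next
      case False
      note smaller = subtrees_remove_leaf[OF less.prems(2,3) False leaf not_sym[OF lp(3)]]
      have "\<exists>n\<in>N - {l}. \<forall>T\<in>(\<lambda>T. T - {l}) ` TT. n \<in> T"
        by (rule less.hyps[OF card_Diff1_less[OF fN lp(1)] is_tree_remove_leaf[OF less.prems(1) lp leaf]
              smaller])
      then show ?thesis by auto
    qed
  qed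
qed

definition join_edges ::
    "('b \<Rightarrow> 'c) \<Rightarrow> ('b \<Rightarrow> 'c) \<Rightarrow> 'b set set \<Rightarrow> 'b set set \<Rightarrow> 'b \<Rightarrow> 'b \<Rightarrow> 'c set set" where
  "join_edges f g FA FB ia ib = (`) f ` FA \<union> (`) g ` FB \<union> {{f ia, g ib}}"

lemma join_edges_left:
  assumes "{a, b} \<in> FA"
  shows "{f a, f b} \<in> join_edges f g FA FB ia ib"
proof -
  have "f ` {a, b} \<in> (`) f ` FA" using assms by blast
  then show ?thesis unfolding join_edges_def by simp
qed

lemma join_edges_right:
  assumes "{a, b} \<in> FB"
  shows "{g a, g b} \<in> join_edges f g FA FB ia ib"
proof -
  have "g ` {a, b} \<in> (`) g ` FB" using assms by blast
  then show ?thesis unfolding join_edges_def by simp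
qed

lemma connected_in_join_edges:
  assumes "connected_in FA SA" "connected_in FB SB" "SA = {} \<or> SB = {} \<or> ia \<in> SA \<and> ib \<in> SB"
  shows "connected_in (join_edges f g FA FB ia ib) (f ` SA \<union> g ` SB)"
proof -
  have A: "connected_in (join_edges f g FA FB ia ib) (f ` SA)"
    using assms(1) by (rule connected_in_image) (rule join_edges_left)
  have B: "connected_in (join_edges f g FA FB ia ib) (g ` SB)"
    using assms(2) by (rule connected_in_image) (rule join_edges_right)
  consider "SA = {}" | "SB = {}" | "ia \<in> SA" "ib \<in> SB" using assms(3) by blast
  then show ?thesis
  proof cases
    case 3
    moreover have "{f ia, g ib} \<in> join_edges f g FA FB ia ib" unfolding join_edges_def by simp
    ultimately show ?thesis by (intro connected_in_Un_edge[OF A B]) auto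
  qed (use A B in simp_all)
qed

lemma graph_image:
  assumes "graph N F" "inj f"
  shows "graph (f ` N) ((`) f ` F)"
  unfolding graph_def
proof (intro conjI ballI)
  show "finite (f ` N)" using assms(1) unfolding graph_def by simp
  fix e assume "e \<in> (`) f ` F"
  then obtain e0 where "e0 \<in> F" "e = f ` e0" by blast
  moreover obtain u v where "e0 = {u, v}" "u \<noteq> v" "u \<in> N" "v \<in> N"
    using graph_edgeE[OF assms(1) \<open>e0 \<in> F\<close>] by blast
  ultimately show "\<exists>u v. e = {u, v} \<and> u \<noteq> v \<and> u \<in> f ` N \<and> v \<in> f ` N"
    using assms(2) by (intro exI[of _ "f u"] exI[of _ "f v"]) (auto simp: inj_eq)
qed

lemma graph_join_edges:
  assumes "graph NA FA" "graph NB FB" "ia \<in> NA" "ib \<in> NB"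
    and "inj f" "inj g" "\<And>a b. f a \<noteq> g b"
  shows "graph (f ` NA \<union> g ` NB) (join_edges f g FA FB ia ib)"
  unfolding graph_def join_edges_def
proof (intro conjI ballI)
  show "finite (f ` NA \<union> g ` NB)" using assms(1,2) unfolding graph_def by simp
  fix e assume "e \<in> (`) f ` FA \<union> (`) g ` FB \<union> {{f ia, g ib}}"
  then consider "e \<in> (`) f ` FA" | "e \<in> (`) g ` FB" | "e = {f ia, g ib}" by blast
  then show "\<exists>u v. e = {u, v} \<and> u \<noteq> v \<and> u \<in> f ` NA \<union> g ` NB \<and> v \<in> f ` NA \<union> g ` NB"
  proof cases
    case 1
    then show ?thesis using graph_image[OF assms(1,5)] unfolding graph_def by (metis UnI1)
  next
    case 2
    then show ?thesis using graph_image[OF assms(2,6)] unfolding graph_def by (metis UnI2)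
  qed (use assms(3,4,7) in blast)
qed

lemma card_join_edges:
  assumes "graph NA FA" "graph NB FB" "ia \<in> NA" "ib \<in> NB"
    and "inj f" "inj g" "\<And>a b. f a \<noteq> g b"
  shows "card (join_edges f g FA FB ia ib) = card FA + card FB + 1"
proof -
  have fe: "e \<subseteq> f ` NA" if "e \<in> (`) f ` FA" for e
    using that assms(1) unfolding graph_def by auto
  have ge: "e \<subseteq> g ` NB" "e \<noteq> {}" if "e \<in> (`) g ` FB" for e
    using that assms(2) unfolding graph_def by auto
  have disjN: "f ` NA \<inter> g ` NB = {}" using assms(7) by auto
  have disj: "(`) f ` FA \<inter> (`) g ` FB = {}"
  proof (rule ccontr)
    assume "(`) f ` FA \<inter> (`) g ` FB \<noteq> {}"
    then obtain e where "e \<in> (`) f ` FA" "e \<in> (`) g ` FB" by blast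
    then have "e \<subseteq> f ` NA \<inter> g ` NB" "e \<noteq> {}" using fe ge by auto
    then show False using disjN by blast
  qed
  have new: "{f ia, g ib} \<notin> (`) f ` FA \<union> (`) g ` FB"
  proof
    assume "{f ia, g ib} \<in> (`) f ` FA \<union> (`) g ` FB"
    then have "g ib \<in> f ` NA \<or> f ia \<in> g ` NB" using fe ge by blast
    then show False using disjN assms(3,4) by blast
  qed
  have "inj_on ((`) f) FA" "inj_on ((`) g) FB"
    using assms(5,6) by (simp_all add: inj_on_def inj_image_eq_iff)
  then show ?thesis
    using disj new graph_finite_edges[OF assms(1)] graph_finite_edges[OF assms(2)]
    unfolding join_edges_def by (simp add: card_Un_disjoint card_image)
qed

lemma is_tree_join:
  assumes tA: "is_tree NA FA" and tB: "is_tree NB FB" and ia: "ia \<in> NA" and ib: "ib \<in> NB"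
    and f: "inj f" and g: "inj g" and fg: "\<And>a b. f a \<noteq> g b"
  shows "is_tree (f ` NA \<union> g ` NB) (join_edges f g FA FB ia ib)"
proof -
  have gA: "graph NA FA" and gB: "graph NB FB"
    and cA: "card FA = card NA - 1" and cB: "card FB = card NB - 1"
    and conA: "connected_in FA NA" and conB: "connected_in FB NB"
    using tA tB unfolding is_tree_def by auto
  have fNA: "finite NA" and fNB: "finite NB" using gA gB unfolding graph_def by auto
  have "card (f ` NA \<union> g ` NB) = card NA + card NB"
    using fNA fNB fg f g by (subst card_Un_disjoint) (auto simp: card_image inj_on_subset)
  moreover have "card NA \<ge> 1" "card NB \<ge> 1"
    using ia ib fNA fNB by (auto simp: Suc_le_eq card_gt_0_iff)
  ultimately show ?thesis
    using graph_join_edges[OF gA gB ia ib f g fg] card_join_edges[OF gA gB ia ib f g fg]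
      connected_in_join_edges[OF conA conB] cA cB ia ib unfolding is_tree_def by auto
qed


section \<open>Tree decompositions\<close>

definition tree_decomp ::
    "'a set \<Rightarrow> 'a set set \<Rightarrow> nat \<Rightarrow> nat set \<Rightarrow> nat set set \<Rightarrow> (nat \<Rightarrow> 'a set) \<Rightarrow> bool" where
  "tree_decomp V E k N F B \<longleftrightarrow> is_tree N F \<and>
     (\<forall>i\<in>N. B i \<subseteq> V \<and> card (B i) \<le> k + 1) \<and>
     (\<forall>v\<in>V. \<exists>i\<in>N. v \<in> B i) \<and>
     (\<forall>e\<in>E. \<exists>i\<in>N. e \<subseteq> B i) \<and>
     (\<forall>v\<in>V. connected_in F {i\<in>N. v \<in> B i})"

lemma tw_le_iff_tree_decomp: "tw_le V E k \<longleftrightarrow> (\<exists>N F B. tree_decomp V E k N F B)"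
  unfolding tw_le_def tree_decomp_def by auto

lemma tree_decompD:
  assumes "tree_decomp V E k N F B"
  shows "is_tree N F" "\<And>i. i \<in> N \<Longrightarrow> B i \<subseteq> V" "\<And>i. i \<in> N \<Longrightarrow> card (B i) \<le> k + 1"
    "\<And>v. v \<in> V \<Longrightarrow> \<exists>i\<in>N. v \<in> B i" "\<And>e. e \<in> E \<Longrightarrow> \<exists>i\<in>N. e \<subseteq> B i"
    "\<And>v. v \<in> V \<Longrightarrow> connected_in F {i\<in>N. v \<in> B i}"
  using assms unfolding tree_decomp_def by auto

lemma tw_le_subgraph:
  assumes "tw_le V E k" "E' \<subseteq> E" "finite V" "V' \<subseteq> V" "\<forall>e\<in>E'. e \<subseteq> V'"
  shows "tw_le V' E' k"
proof -
  obtain N F B where d: "tree_decomp V E k N F B" using assms(1) tw_le_iff_tree_decomp by blast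
  have "tree_decomp V' E' k N F (\<lambda>i. B i \<inter> V')"
    unfolding tree_decomp_def
  proof (intro conjI ballI)
    fix i assume "i \<in> N"
    then have "B i \<subseteq> V" "card (B i) \<le> k + 1" using tree_decompD[OF d] by auto
    then show "card (B i \<inter> V') \<le> k + 1"
      using assms(3) card_mono[of "B i" "B i \<inter> V'"] finite_subset by fastforce
  next
    fix v assume "v \<in> V'"
    then have "{i\<in>N. v \<in> B i \<inter> V'} = {i\<in>N. v \<in> B i}" by auto
    then show "connected_in F {i\<in>N. v \<in> B i \<inter> V'}"
      using tree_decompD(6)[OF d] assms(4) \<open>v \<in> V'\<close> by auto
  qed (use tree_decompD[OF d] assms(2,4,5) in \<open>fastforce+\<close>)
  then show ?thesis using tw_le_iff_tree_decomp by blast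
qed

lemma tree_decomp_edge_subset:
  assumes "tree_decomp V E k N F B" "e \<in> E"
  shows "e \<subseteq> V"
  using tree_decompD(2,5)[OF assms(1)] assms(2) by blast

text \<open>Contracting the edge \<open>ya\<close>: every bag containing \<open>y\<close> receives \<open>a\<close> in its place.\<close>

lemma tw_le_bypass_vertex:
  assumes "tw_le V E k" "{y, a} \<in> E" "{y, b} \<in> E" "finite V" "y \<noteq> a" "y \<noteq> b"
  shows "tw_le (V - {y}) (insert {a, b} {e\<in>E. y \<notin> e}) k"
proof -
  obtain N F B where d: "tree_decomp V E k N F B" using assms(1) tw_le_iff_tree_decomp by blast
  have V: "y \<in> V" "a \<in> V" "b \<in> V" using tree_decomp_edge_subset[OF d] assms(2,3) by blast+
  define B' where "B' i = (if y \<in> B i then insert a (B i - {y}) else B i)" for i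
  have "tree_decomp (V - {y}) (insert {a, b} {e\<in>E. y \<notin> e}) k N F B'"
    unfolding tree_decomp_def
  proof (intro conjI ballI)
    show "is_tree N F" using tree_decompD(1)[OF d] .
  next
    fix i assume "i \<in> N"
    then have "B i \<subseteq> V" "card (B i) \<le> k + 1" using tree_decompD[OF d] by auto
    moreover have "finite (B i)" using \<open>B i \<subseteq> V\<close> assms(4) finite_subset by auto
    ultimately show "B' i \<subseteq> V - {y}" "card (B' i) \<le> k + 1"
      using V assms(5) unfolding B'_def by (auto simp: card_insert_if card_gt_0_iff)
  next
    fix v assume "v \<in> V - {y}"
    then show "\<exists>i\<in>N. v \<in> B' i" using tree_decompD(4)[OF d] unfolding B'_def by fastforce
  next
    fix e assume "e \<in> insert {a, b} {e\<in>E. y \<notin> e}"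
    then consider "e = {a, b}" | "e \<in> E" "y \<notin> e" by blast
    then show "\<exists>i\<in>N. e \<subseteq> B' i"
    proof cases
      case 1
      obtain i where "i \<in> N" "{y, b} \<subseteq> B i" using tree_decompD(5)[OF d] assms(3) by blast
      then show ?thesis using 1 assms(6) unfolding B'_def by (intro bexI[of _ i]) auto
    next
      case 2
      then obtain i where "i \<in> N" "e \<subseteq> B i" using tree_decompD(5)[OF d] by blast
      then show ?thesis using 2 unfolding B'_def by (intro bexI[of _ i]) auto
    qed
  next
    fix v assume v: "v \<in> V - {y}"
    show "connected_in F {i\<in>N. v \<in> B' i}"
    proof (cases "v = a")
      case True
      obtain i0 where "i0 \<in> N" "{y, a} \<subseteq> B i0" using tree_decompD(5)[OF d] assms(2) by blast
      then have "connected_in F ({i\<in>N. a \<in> B i} \<union> {i\<in>N. y \<in> B i})"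
        using tree_decompD(6)[OF d] V by (intro connected_in_Un[of _ _ _ i0]) auto
      moreover have "{i\<in>N. v \<in> B' i} = {i\<in>N. a \<in> B i} \<union> {i\<in>N. y \<in> B i}"
        using True assms(5) unfolding B'_def by auto
      ultimately show ?thesis by simp
    next
      case False
      then have "{i\<in>N. v \<in> B' i} = {i\<in>N. v \<in> B i}" using v unfolding B'_def by auto
      then show ?thesis using tree_decompD(6)[OF d] v by simp
    qed
  qed
  then show ?thesis using tw_le_iff_tree_decomp by blast
qed

lemma tree_decomp_nodes_containing_connected:
  assumes "tree_decomp V E k N F B"
  shows "connected_in F {i\<in>N. v \<in> B i}"
proof (cases "v \<in> V")
  case False
  then have "{i\<in>N. v \<in> B i} = {}" using tree_decompD(2)[OF assms] by blast
  then show ?thesis unfolding connected_in_def by (simp only: empty_iff ball_empty)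
qed (rule tree_decompD(6)[OF assms])

text \<open>The two decompositions are placed side by side on the even and the odd node numbers,
and one new tree edge joins a bag of each that contains the separator \<open>A \<inter> B\<close>.\<close>

lemma tree_decomp_glue:
  assumes dA: "tree_decomp A EA k NA FA BA" and dB: "tree_decomp B EB k NB FB BB"
    and ia: "ia \<in> NA" "A \<inter> B \<subseteq> BA ia" and ib: "ib \<in> NB" "A \<inter> B \<subseteq> BB ib"
    and E: "E \<subseteq> EA \<union> EB"
  shows "tw_le (A \<union> B) E k"
proof -
  define f :: "nat \<Rightarrow> nat" where "f i = 2 * i" for i
  define g :: "nat \<Rightarrow> nat" where "g i = Suc (2 * i)" for i
  define N where "N = f ` NA \<union> g ` NB"
  define Bg where "Bg n = (if even n then BA (n div 2) else BB (n div 2))" for n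
  have fg: "f i \<noteq> g j" for i j unfolding f_def g_def by presburger
  have Bf [simp]: "Bg (f i) = BA i" and Bgg [simp]: "Bg (g i) = BB i" for i
    unfolding Bg_def f_def g_def by simp_all
  have "tree_decomp (A \<union> B) E k N (join_edges f g FA FB ia ib) Bg"
    unfolding tree_decomp_def
  proof (intro conjI ballI)
    show "is_tree N (join_edges f g FA FB ia ib)"
      unfolding N_def
      by (rule is_tree_join[OF tree_decompD(1)[OF dA] tree_decompD(1)[OF dB] ia(1) ib(1) _ _ fg])
        (auto simp: f_def g_def inj_def)
  next
    fix n assume "n \<in> N"
    then obtain i where "i \<in> NA \<and> Bg n = BA i \<or> i \<in> NB \<and> Bg n = BB i"
      unfolding N_def by force
    then show "Bg n \<subseteq> A \<union> B" "card (Bg n) \<le> k + 1"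
      using tree_decompD(2,3)[OF dA, of i] tree_decompD(2,3)[OF dB, of i] by auto
  next
    fix v assume "v \<in> A \<union> B"
    then have "(\<exists>i\<in>NA. v \<in> Bg (f i)) \<or> (\<exists>i\<in>NB. v \<in> Bg (g i))"
      using tree_decompD(4)[OF dA] tree_decompD(4)[OF dB] by auto
    then show "\<exists>n\<in>N. v \<in> Bg n" unfolding N_def by blast
  next
    fix e assume "e \<in> E"
    then have "(\<exists>i\<in>NA. e \<subseteq> Bg (f i)) \<or> (\<exists>i\<in>NB. e \<subseteq> Bg (g i))"
      using E tree_decompD(5)[OF dA] tree_decompD(5)[OF dB] by auto
    then show "\<exists>n\<in>N. e \<subseteq> Bg n" unfolding N_def by blast
  next
    fix v assume "v \<in> A \<union> B"
    let ?SA = "{i\<in>NA. v \<in> BA i}" and ?SB = "{i\<in>NB. v \<in> BB i}"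
    have "?SA = {} \<or> ?SB = {} \<or> ia \<in> ?SA \<and> ib \<in> ?SB"
      using ia ib tree_decompD(2)[OF dA] tree_decompD(2)[OF dB] by blast
    then have "connected_in (join_edges f g FA FB ia ib) (f ` ?SA \<union> g ` ?SB)"
      by (rule connected_in_join_edges[OF tree_decomp_nodes_containing_connected[OF dA]
            tree_decomp_nodes_containing_connected[OF dB]])
    moreover have "{n\<in>N. v \<in> Bg n} = f ` ?SA \<union> g ` ?SB" unfolding N_def by auto
    ultimately show "connected_in (join_edges f g FA FB ia ib) {n\<in>N. v \<in> Bg n}" by simp
  qed
  then show ?thesis using tw_le_iff_tree_decomp by blast
qed

lemma tree_decomp_bag_containing:
  assumes d: "tree_decomp W EW k N F B" and K: "K = {} \<or> (\<exists>u\<in>W. K = {u}) \<or> K \<in> EW"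
  obtains i where "i \<in> N" "K \<subseteq> B i"
proof -
  have "N \<noteq> {}" using tree_decompD(1)[OF d] unfolding is_tree_def by simp
  then have "\<exists>i\<in>N. K \<subseteq> B i" using K tree_decompD(4,5)[OF d] by blast
  then show ?thesis using that by blast
qed

lemma tw_le_glue:
  assumes "tw_le A EA k" "tw_le B EB k"
    and sep: "A \<inter> B = {} \<or> (\<exists>u. A \<inter> B = {u}) \<or> (A \<inter> B \<in> EA \<and> A \<inter> B \<in> EB)"
    and E: "E \<subseteq> EA \<union> EB"
  shows "tw_le (A \<union> B) E k"
proof -
  obtain NA FA BA NB FB BB where dA: "tree_decomp A EA k NA FA BA" and dB: "tree_decomp B EB k NB FB BB"
    using assms(1,2) tw_le_iff_tree_decomp by meson
  have "A \<inter> B = {} \<or> (\<exists>u\<in>A. A \<inter> B = {u}) \<or> A \<inter> B \<in> EA"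
    and "A \<inter> B = {} \<or> (\<exists>u\<in>B. A \<inter> B = {u}) \<or> A \<inter> B \<in> EB"
    using sep by blast+
  then obtain ia ib where "ia \<in> NA" "A \<inter> B \<subseteq> BA ia" "ib \<in> NB" "A \<inter> B \<subseteq> BB ib"
    using tree_decomp_bag_containing[OF dA] tree_decomp_bag_containing[OF dB] by metis
  then show ?thesis by (rule tree_decomp_glue[OF dA dB _ _ _ _ E])
qed

lemma tw_le_glue_induced:
  assumes "tw_le A {e\<in>E. e \<subseteq> A} k" "tw_le B {e\<in>E. e \<subseteq> B} k"
    and "A \<inter> B \<subseteq> {a, b}" "{a, b} \<in> E"
    and "E' \<subseteq> E" "\<forall>e\<in>E'. e \<subseteq> A \<or> e \<subseteq> B"
  shows "tw_le (A \<union> B) E' k"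
proof (rule tw_le_glue[OF assms(1,2)])
  have "A \<inter> B \<subseteq> {a} \<or> A \<inter> B \<subseteq> {b} \<or> A \<inter> B = {a, b}" using assms(3) by blast
  then show "A \<inter> B = {} \<or> (\<exists>u. A \<inter> B = {u}) \<or>
      (A \<inter> B \<in> {e\<in>E. e \<subseteq> A} \<and> A \<inter> B \<in> {e\<in>E. e \<subseteq> B})"
    using assms(4) by (auto simp: subset_singleton_iff)
qed (use assms(5,6) in blast)

lemma tree_decomp_nodes_meeting_connected:
  assumes d: "tree_decomp W E0 k N F B" and Y: "Y \<subseteq> W" "connected_in E0 Y"
  shows "connected_in F {n\<in>N. B n \<inter> Y \<noteq> {}}"
    (is "connected_in F ?T")
  unfolding connected_in_def
proof (intro ballI)
  have conn: "connected_in F {i\<in>N. u \<in> B i}" and sub: "{i\<in>N. u \<in> B i} \<subseteq> ?T" if "u \<in> Y" for u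
    using that tree_decompD(6)[OF d] Y(1) by blast+
  fix n m assume n: "n \<in> ?T" and m: "m \<in> ?T"
  then obtain u v where u: "u \<in> B n" "u \<in> Y" and v: "v \<in> B m" "v \<in> Y" by auto
  have "reach_in E0 Y u v" using connected_inD[OF Y(2) u(2) v(2)] .
  then have "\<forall>m'\<in>N. v \<in> B m' \<longrightarrow> reach_in F ?T n m'"
  proof (induction rule: reach_in_induct)
    case base
    show ?case
    proof (intro ballI impI)
      fix m' assume "m' \<in> N" "u \<in> B m'"
      then have "reach_in F {i\<in>N. u \<in> B i} n m'" using conn[OF u(2)] u n by (blast intro: connected_inD)
      then show "reach_in F ?T n m'" using sub[OF u(2)] by (rule reach_in_mono_set)
    qed
  next
    case (step y z)
    show ?case
    proof (intro ballI impI)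
      fix m' assume "m' \<in> N" "z \<in> B m'"
      obtain p where p: "p \<in> N" "{y, z} \<subseteq> B p" using tree_decompD(5)[OF d] step.hyps(2) by blast
      have "reach_in F ?T n p" using step.IH p by blast
      moreover have "reach_in F {i\<in>N. z \<in> B i} p m'"
        using conn[OF step.hyps(4)] p \<open>m' \<in> N\<close> \<open>z \<in> B m'\<close> by (blast intro: connected_inD)
      then have "reach_in F ?T p m'" using sub[OF step.hyps(4)] by (rule reach_in_mono_set)
      ultimately show "reach_in F ?T n m'" by (rule reach_in_trans)
    qed
  qed
  then show "reach_in F ?T n m" using m v by blast
qed

lemma tree_decomp_nodes_meeting_subtree:
  assumes d: "tree_decomp W E0 k N F B" and Y: "Y \<subseteq> W" "Y \<noteq> {}" "connected_in E0 Y"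
  shows "{n\<in>N. B n \<inter> Y \<noteq> {}} \<noteq> {} \<and> {n\<in>N. B n \<inter> Y \<noteq> {}} \<subseteq> N
    \<and> connected_in F {n\<in>N. B n \<inter> Y \<noteq> {}}"
proof -
  obtain y where "y \<in> Y" using Y(2) by blast
  then obtain i where "i \<in> N" "y \<in> B i" using tree_decompD(4)[OF d] Y(1) by blast
  then show ?thesis
    using tree_decomp_nodes_meeting_connected[OF d Y(1,3)] \<open>y \<in> Y\<close> by blast
qed

lemma tree_decomp_nodes_meeting_adjacent:
  assumes d: "tree_decomp W E0 k N F B" and adjacent: "\<exists>a\<in>Y. \<exists>b\<in>Y'. {a, b} \<in> E0"
  shows "{n\<in>N. B n \<inter> Y \<noteq> {}} \<inter> {n\<in>N. B n \<inter> Y' \<noteq> {}} \<noteq> {}"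
proof -
  obtain a b where "a \<in> Y" "b \<in> Y'" "{a, b} \<in> E0" using adjacent by blast
  then obtain i where "i \<in> N" "{a, b} \<subseteq> B i" using tree_decompD(5)[OF d] by blast
  then show ?thesis using \<open>a \<in> Y\<close> \<open>b \<in> Y'\<close> by blast
qed

text \<open>The nodes whose bags meet a branch set form a subtree. The four subtrees intersect
pairwise, so by the Helly property one bag meets all four branch sets.\<close>

lemma tw_le_2_no_K4_minor:
  assumes tw: "tw_le W E0 2" and fin: "finite W"
    and sub: "Y1 \<subseteq> W" "Y2 \<subseteq> W" "Y3 \<subseteq> W" "Y4 \<subseteq> W"
    and ne: "Y1 \<noteq> {}" "Y2 \<noteq> {}" "Y3 \<noteq> {}" "Y4 \<noteq> {}"
    and con: "connected_in E0 Y1" "connected_in E0 Y2" "connected_in E0 Y3" "connected_in E0 Y4"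
    and dis: "Y1 \<inter> Y2 = {}" "Y1 \<inter> Y3 = {}" "Y1 \<inter> Y4 = {}" "Y2 \<inter> Y3 = {}" "Y2 \<inter> Y4 = {}" "Y3 \<inter> Y4 = {}"
    and adj: "\<exists>a\<in>Y1. \<exists>b\<in>Y2. {a, b} \<in> E0" "\<exists>a\<in>Y1. \<exists>b\<in>Y3. {a, b} \<in> E0"
      "\<exists>a\<in>Y1. \<exists>b\<in>Y4. {a, b} \<in> E0" "\<exists>a\<in>Y2. \<exists>b\<in>Y3. {a, b} \<in> E0"
      "\<exists>a\<in>Y2. \<exists>b\<in>Y4. {a, b} \<in> E0" "\<exists>a\<in>Y3. \<exists>b\<in>Y4. {a, b} \<in> E0"
  shows False
proof -
  obtain N F B where d: "tree_decomp W E0 2 N F B" using tw tw_le_iff_tree_decomp by blast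
  define T where "T Y = {n\<in>N. B n \<inter> Y \<noteq> {}}" for Y
  have subtree: "T Y \<noteq> {} \<and> T Y \<subseteq> N \<and> connected_in F (T Y)"
    if "Y \<subseteq> W" "Y \<noteq> {}" "connected_in E0 Y" for Y
    unfolding T_def using tree_decomp_nodes_meeting_subtree[OF d that] .
  have meet: "T Y \<inter> T Y' \<noteq> {}" "T Y' \<inter> T Y \<noteq> {}"
    if "\<exists>a\<in>Y. \<exists>b\<in>Y'. {a, b} \<in> E0" for Y Y'
    unfolding T_def using tree_decomp_nodes_meeting_adjacent[OF d that] by blast+
  let ?TT = "{T Y1, T Y2, T Y3, T Y4}"
  have "\<forall>S\<in>?TT. S \<noteq> {} \<and> S \<subseteq> N \<and> connected_in F S"
    using subtree[OF sub(1) ne(1) con(1)] subtree[OF sub(2) ne(2) con(2)]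
      subtree[OF sub(3) ne(3) con(3)] subtree[OF sub(4) ne(4) con(4)] by simp
  moreover have "\<forall>S1\<in>?TT. \<forall>S2\<in>?TT. S1 \<inter> S2 \<noteq> {}"
    using meet[OF adj(1)] meet[OF adj(2)] meet[OF adj(3)] meet[OF adj(4)] meet[OF adj(5)]
      meet[OF adj(6)] subtree[OF sub(1) ne(1) con(1)] subtree[OF sub(2) ne(2) con(2)]
      subtree[OF sub(3) ne(3) con(3)] subtree[OF sub(4) ne(4) con(4)] by simp
  ultimately have "\<exists>n\<in>N. \<forall>S\<in>?TT. n \<in> S" by (rule subtrees_Helly[OF tree_decompD(1)[OF d]])
  then obtain n where n: "n \<in> N" "n \<in> T Y1" "n \<in> T Y2" "n \<in> T Y3" "n \<in> T Y4" by auto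
  then have "B n \<inter> Y1 \<noteq> {}" "B n \<inter> Y2 \<noteq> {}" "B n \<inter> Y3 \<noteq> {}" "B n \<inter> Y4 \<noteq> {}"
    unfolding T_def by auto
  then obtain a1 a2 a3 a4 where a: "a1 \<in> B n \<inter> Y1" "a2 \<in> B n \<inter> Y2" "a3 \<in> B n \<inter> Y3" "a4 \<in> B n \<inter> Y4"
    by (meson all_not_in_conv)
  have "a1 \<noteq> a2" "a1 \<noteq> a3" "a1 \<noteq> a4" "a2 \<noteq> a3" "a2 \<noteq> a4" "a3 \<noteq> a4"
    using a dis by blast+
  then have "{a1, a2, a3, a4} \<subseteq> B n" "card {a1, a2, a3, a4} = 4"
    using a by auto
  moreover have "finite (B n)" "card (B n) \<le> 3"
    using tree_decompD(2,3)[OF d n(1)] fin finite_subset by auto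
  ultimately show False using card_mono[of "B n" "{a1, a2, a3, a4}"] by simp
qed


section \<open>The reduction\<close>

lemma tw_le_edge_subset: "tw_le V E k \<Longrightarrow> e \<in> E \<Longrightarrow> e \<subseteq> V"
  using tree_decomp_edge_subset tw_le_iff_tree_decomp by metis

lemma del_edges_mono: "E' \<subseteq> E \<Longrightarrow> del_edges E' S \<subseteq> del_edges E S"
  unfolding del_edges_def by blast

lemma solution_edge_subset:
  assumes "finite V" "solution V E t S" "E' \<subseteq> E"
  shows "solution V E' t S"
proof -
  have tw: "tw_le (V - S) (del_edges E S) 2" using assms(2) unfolding solution_def by simp
  have sub: "del_edges E' S \<subseteq> del_edges E S" using assms(3) by (rule del_edges_mono)
  have "tw_le (V - S) (del_edges E' S) 2"
    using tw sub by (rule tw_le_subgraph) (use assms(1) tw_le_edge_subset[OF tw subsetD[OF sub]] in auto)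
  then show ?thesis using assms(2) unfolding solution_def by simp
qed

lemma solution_delete_hit_edge:
  assumes "solution V (E - {e}) t S" "e \<inter> S \<noteq> {}"
  shows "solution V E t S"
proof -
  have "del_edges (E - {e}) S = del_edges E S" using assms(2) unfolding del_edges_def by blast
  then show ?thesis using assms(1) unfolding solution_def by simp
qed

lemma solution_induced_tw_le:
  assumes "finite V" "solution V (E - {e}) t S" "W \<subseteq> V - S" "\<not> e \<subseteq> W"
  shows "tw_le W {e'\<in>E. e' \<subseteq> W} 2"
proof -
  have "tw_le (V - S) (del_edges (E - {e}) S) 2" using assms(2) unfolding solution_def by simp
  moreover have "{e'\<in>E. e' \<subseteq> W} \<subseteq> del_edges (E - {e}) S"
    using assms(3,4) unfolding del_edges_def by blast
  ultimately show ?thesis by (rule tw_le_subgraph) (use assms(1,3) in auto)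
qed

lemma tidy_modulator_bypass:
  assumes "tidy_modulator V E X" "finite V" "y \<in> X" "{y, a} \<in> E" "{y, b} \<in> E" "a \<notin> X" "b \<notin> X"
  shows "tw_le (V - X) (insert {a, b} (del_edges E X)) 2"
proof -
  have "tw_le (V - (X - {y})) (del_edges E (X - {y})) 2"
    using assms(1,3) unfolding tidy_modulator_def by blast
  moreover have "{y, a} \<in> del_edges E (X - {y})" "{y, b} \<in> del_edges E (X - {y})"
    using assms(4-7) unfolding del_edges_def by auto
  ultimately have "tw_le (V - (X - {y}) - {y}) (insert {a, b} {e\<in>del_edges E (X - {y}). y \<notin> e}) 2"
    by (rule tw_le_bypass_vertex) (use assms(2,3,6,7) in auto)
  moreover have "V - (X - {y}) - {y} = V - X" using assms(3) by blast
  moreover have "{e\<in>del_edges E (X - {y}). y \<notin> e} = del_edges E X"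
    using assms(3) unfolding del_edges_def by blast
  ultimately show ?thesis by simp
qed

locale redundant_edge =
  fixes V :: "'a set" and E :: "'a set set" and t :: nat and X :: "'a set" and x :: 'a
    and P :: "'a list" and i1 i2 i3 i4 :: nat and v1 v2 v3 v4 :: 'a and C :: "'a set"
  assumes graph: "graph V E"
    and tidy: "tidy_modulator V E X"
    and x_in_X: "x \<in> X"
    and path: "simple_path (V - X) (del_edges E X) P"
    and i12: "i1 < i2" and i23: "i2 < i3" and i34: "i3 < i4" and i4_len: "i4 < length P"
    and P1: "P ! i1 = v1" and P2: "P ! i2 = v2" and P3: "P ! i3 = v3" and P4: "P ! i4 = v4"
    and nbhd_x: "{v1, v2, v3, v4} \<subseteq> nbhd V E {x}"
    and component: "component (V - (X \<union> {v1, v4})) (del_edges E (X \<union> {v1, v4})) C"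
    and path_in_C: "\<forall>k. i1 < k \<and> k < i4 \<longrightarrow> P ! k \<in> C"
    and limit1: "limit1 V (E - {{v2, x}}) t (nbhd V E C \<inter> X)"
begin

lemma finite_V: "finite V"
  using graph unfolding graph_def by simp

lemma edge_subset: "e \<in> E \<Longrightarrow> e \<subseteq> V"
  by (erule graph_edgeE[OF graph]) simp

lemma edge_endpoints: "{a, b} \<in> E \<Longrightarrow> a \<in> V \<and> b \<in> V"
  using edge_subset by blast

lemma path_vertex: "k < length P \<Longrightarrow> P ! k \<in> V \<and> P ! k \<notin> X"
  using path unfolding simple_path_def by (meson DiffE nth_mem subsetD)

lemma path_edge: "Suc k < length P \<Longrightarrow> {P ! k, P ! Suc k} \<in> E"
  using path unfolding simple_path_def del_edges_def by blast

lemma path_index_inj: "k < length P \<Longrightarrow> k' < length P \<Longrightarrow> P ! k = P ! k' \<Longrightarrow> k = k'"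
  using path unfolding simple_path_def by (simp add: nth_eq_iff_index_eq)

lemma v_in_V: "v1 \<in> V" "v2 \<in> V" "v3 \<in> V" "v4 \<in> V"
  and v_notin_X: "v1 \<notin> X" "v2 \<notin> X" "v3 \<notin> X" "v4 \<notin> X"
  using path_vertex[of i1] path_vertex[of i2] path_vertex[of i3] path_vertex[of i4]
    i12 i23 i34 i4_len P1 P2 P3 P4 by auto

lemma v_distinct: "v1 \<noteq> v2" "v1 \<noteq> v3" "v1 \<noteq> v4" "v2 \<noteq> v3" "v2 \<noteq> v4" "v3 \<noteq> v4"
  using path_index_inj[of i1 i2] path_index_inj[of i1 i3] path_index_inj[of i1 i4]
    path_index_inj[of i2 i3] path_index_inj[of i2 i4] path_index_inj[of i3 i4]
    i12 i23 i34 i4_len P1 P2 P3 P4 by auto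

lemma x_edges: "{x, v1} \<in> E" "{x, v2} \<in> E" "{x, v3} \<in> E" "{x, v4} \<in> E"
  using nbhd_x unfolding nbhd_def by auto

lemma x_in_V: "x \<in> V"
  using edge_endpoints[OF x_edges(1)] by simp

lemma x_neq_v: "x \<noteq> v1" "x \<noteq> v2" "x \<noteq> v3" "x \<noteq> v4"
  using v_notin_X x_in_X by auto

lemma x_edges_remain: "{x, v1} \<noteq> {v2, x}" "{x, v3} \<noteq> {v2, x}" "{x, v4} \<noteq> {v2, x}"
  using v_distinct x_neq_v by (metis doubleton_eq_iff)+

lemma C_subset: "C \<subseteq> V - (X \<union> {v1, v4})"
  using component unfolding component_def reach_in_def by auto

lemma C_disjoint: "C \<inter> X = {}" "v1 \<notin> C" "v4 \<notin> C" "x \<notin> C"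
  using C_subset x_in_X by auto

lemma v23_in_C: "v2 \<in> C" "v3 \<in> C"
  using path_in_C i12 i23 i34 P2 P3 by auto

lemma C_neighbour:
  assumes "c \<in> C" "{c, u} \<in> E"
  shows "u \<in> C \<or> u \<in> nbhd V E C \<inter> X \<or> u = v1 \<or> u = v4"
proof -
  let ?W = "V - (X \<union> {v1, v4})"
  obtain w where w: "C = {u. reach_in (del_edges E (X \<union> {v1, v4})) ?W w u}"
    using component unfolding component_def by blast
  have "u \<in> V" "u \<notin> C" if "u \<notin> C" using edge_endpoints[OF assms(2)] that by auto
  moreover have "u \<in> C" if "u \<in> ?W"
  proof -
    have "{c, u} \<in> del_edges E (X \<union> {v1, v4})"
      using assms C_subset that unfolding del_edges_def by blast
    then show ?thesis using reach_class_closed[of c u] assms(1) that w by blast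
  qed
  ultimately show ?thesis using assms unfolding nbhd_def by blast
qed

lemma x_in_nbhd_C: "x \<in> nbhd V E C \<inter> X"
  using x_edges(2) v23_in_C(1) x_in_V x_in_X C_disjoint(4) unfolding nbhd_def
  by (auto simp: insert_commute)

lemma nbhd_C_in_solution:
  assumes "solution V (E - {{v2, x}}) t S" "x \<notin> S" "u \<in> nbhd V E C \<inter> X" "u \<noteq> x"
  shows "u \<in> S"
proof (rule ccontr)
  assume "u \<notin> S"
  let ?Z = "nbhd V E C \<inter> X"
  have "finite (?Z - S)" using finite_V unfolding nbhd_def by simp
  moreover have "{u, x} \<subseteq> ?Z - S" using assms(2,3) x_in_nbhd_C \<open>u \<notin> S\<close> by blast
  ultimately have "card {u, x} \<le> card (?Z - S)" by (rule card_mono)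
  moreover have "card (?Z - S) \<le> 1" using limit1 assms(1) unfolding limit1_def by blast
  ultimately show False using assms(4) by simp
qed

lemma edge_meeting_C:
  assumes "solution V (E - {{v2, x}}) t S" "x \<notin> S" "e \<in> E" "c \<in> e" "c \<in> C"
  shows "e \<subseteq> C \<union> S \<union> {x, v1, v4}"
proof
  fix u assume "u \<in> e"
  obtain a b where "e = {a, b}" using graph_edgeE[OF graph assms(3)] by blast
  then have "u = c \<or> {c, u} \<in> E" using assms(3,4) \<open>u \<in> e\<close> by (auto simp: insert_commute)
  then have "u \<in> C \<or> u \<in> nbhd V E C \<inter> X \<or> u = v1 \<or> u = v4"
    using C_neighbour[OF assms(5)] assms(5) by blast
  then show "u \<in> C \<union> S \<union> {x, v1, v4}"
    using nbhd_C_in_solution[OF assms(1,2)] by blast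
qed

lemma tw_le_outside_X_with_v1v4:
  assumes "A \<subseteq> V - X"
  shows "tw_le A {e\<in>insert {v1, v4} E. e \<subseteq> A} 2"
proof -
  have "tw_le (V - X) (insert {v1, v4} (del_edges E X)) 2"
    using tidy_modulator_bypass[OF tidy finite_V x_in_X x_edges(1,4) v_notin_X(1,4)] .
  moreover have "{e\<in>insert {v1, v4} E. e \<subseteq> A} \<subseteq> insert {v1, v4} (del_edges E X)"
    using assms unfolding del_edges_def by blast
  ultimately show ?thesis by (rule tw_le_subgraph) (use assms finite_V in auto)
qed

lemma tw_le_rest_with_v1v4:
  assumes sol: "solution V (E - {{v2, x}}) t S" and "x \<notin> S" "R \<subseteq> V - S - {x}"
  shows "tw_le R {e\<in>insert {v1, v4} E. e \<subseteq> R} 2"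
proof (cases "{v1, v4} \<subseteq> R")
  case True
  let ?E0 = "del_edges (E - {{v2, x}}) S"
  have "tw_le (V - S) ?E0 2" using sol unfolding solution_def by simp
  moreover have "{x, v1} \<in> ?E0" "{x, v4} \<in> ?E0"
    using x_edges x_edges_remain True assms(2,3) unfolding del_edges_def by auto
  ultimately have "tw_le (V - S - {x}) (insert {v1, v4} {e\<in>?E0. x \<notin> e}) 2"
    by (rule tw_le_bypass_vertex) (use finite_V x_neq_v in auto)
  moreover have "{e\<in>insert {v1, v4} E. e \<subseteq> R} \<subseteq> insert {v1, v4} {e\<in>?E0. x \<notin> e}"
    using assms(3) unfolding del_edges_def by blast
  ultimately show ?thesis by (rule tw_le_subgraph) (use assms(3) finite_V in auto)
next
  case False
  then have "{e\<in>insert {v1, v4} E. e \<subseteq> R} = {e\<in>E. e \<subseteq> R}" by auto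
  moreover have "\<not> {v2, x} \<subseteq> R" using assms(3) by blast
  ultimately show ?thesis using solution_induced_tw_le[OF finite_V sol] assms(3) by auto
qed

lemma solution_exchange_C_for_x:
  assumes sol: "solution V (E - {{v2, x}}) t S" and xS: "x \<notin> S" and SC: "S \<inter> C \<noteq> {}"
  shows "solution V E t (insert x (S - C))"
proof -
  define S' where "S' = insert x (S - C)"
  define A where "A = C \<union> ({v1, v4} - S)"
  define R where "R = V - S' - C"
  have finS: "finite S" and SV: "S \<subseteq> V" and cS: "card S \<le> t"
    using sol finite_V finite_subset unfolding solution_def by auto
  have "card S' \<le> Suc (card (S - C))" unfolding S'_def using finS by (simp add: card_insert_if)
  also have "\<dots> \<le> card S" using SC finS by (simp add: Suc_le_eq) (intro psubset_card_mono, auto)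
  finally have cS': "card S' \<le> t" using cS by simp
  have twA: "tw_le A {e\<in>insert {v1, v4} E. e \<subseteq> A} 2"
    using C_subset v_in_V v_notin_X by (intro tw_le_outside_X_with_v1v4) (auto simp: A_def)
  have twR: "tw_le R {e\<in>insert {v1, v4} E. e \<subseteq> R} 2"
    by (rule tw_le_rest_with_v1v4[OF sol xS]) (auto simp: R_def S'_def)
  have "tw_le (A \<union> R) (del_edges E S') 2"
  proof (rule tw_le_glue_induced[OF twA twR])
    show "A \<inter> R \<subseteq> {v1, v4}" unfolding A_def R_def by blast
    show "\<forall>e\<in>del_edges E S'. e \<subseteq> A \<or> e \<subseteq> R"
    proof
      fix e assume "e \<in> del_edges E S'"
      then have e: "e \<in> E" "e \<inter> S' = {}" unfolding del_edges_def by auto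
      show "e \<subseteq> A \<or> e \<subseteq> R"
      proof (cases "e \<inter> C = {}")
        case True
        then show ?thesis using edge_subset[OF e(1)] e(2) unfolding R_def by blast
      next
        case False
        then obtain c where "c \<in> e" "c \<in> C" by blast
        then have "e \<subseteq> C \<union> S \<union> {x, v1, v4}" using edge_meeting_C[OF sol xS e(1)] by blast
        then show ?thesis using e(2) C_disjoint unfolding A_def S'_def by blast
      qed
    qed
  qed (auto simp: del_edges_def)
  moreover have "A \<union> R = V - S'"
    using C_subset C_disjoint v_in_V x_neq_v unfolding A_def R_def S'_def by blast
  moreover have "S' \<subseteq> V" using SV x_in_V unfolding S'_def by blast
  ultimately show ?thesis using cS' unfolding solution_def S'_def[symmetric] by simp
qed

lemma path_segment_vertex:
  assumes "i1 \<le> k" "k \<le> i4"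
  shows "P ! k \<in> C \<or> P ! k = v1 \<or> P ! k = v4"
  using assms path_in_C P1 P4 by (cases "k = i1 \<or> k = i4") auto

lemma path_segment_edge:
  assumes "S \<inter> C = {}" "v1 \<notin> S" "v4 \<notin> S" "i1 \<le> k" "Suc k \<le> i4"
  shows "{P ! k, P ! Suc k} \<in> del_edges (E - {{v2, x}}) S"
proof -
  have "P ! k \<notin> S" "P ! Suc k \<notin> S"
    using path_segment_vertex[of k] path_segment_vertex[of "Suc k"] assms by auto
  moreover have "P ! k \<noteq> x" "P ! Suc k \<noteq> x"
    using path_vertex[of k] path_vertex[of "Suc k"] assms(4,5) i4_len x_in_X by auto
  ultimately show ?thesis
    using path_edge[of k] assms(5) i4_len unfolding del_edges_def by (auto simp: doubleton_eq_iff)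
qed

lemma path_segment_connected:
  assumes "S \<inter> C = {}" "v1 \<notin> S" "v4 \<notin> S" "i1 \<le> a" "b \<le> Suc i4"
  shows "connected_in (del_edges (E - {{v2, x}}) S) {P ! k | k. a \<le> k \<and> k < b}"
  using i4_len path_segment_edge[OF assms(1-3)] assms(4,5) by (intro connected_in_path_segment) auto

lemma path_segments_disjoint:
  assumes "c \<le> length P"
  shows "{P ! k | k. a \<le> k \<and> k < b} \<inter> {P ! k | k. b \<le> k \<and> k < c} = {}"
proof (rule ccontr)
  assume "{P ! k | k. a \<le> k \<and> k < b} \<inter> {P ! k | k. b \<le> k \<and> k < c} \<noteq> {}"
  then obtain k k' where "P ! k = P ! k'" "k < b" "b \<le> k'" "k' < c" by blast
  then show False using path_index_inj[of k k'] assms by simp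
qed

lemma path_branch_sets:
  assumes SC: "S \<inter> C = {}" and v14S: "v1 \<notin> S" "v4 \<notin> S"
  defines "Y2 \<equiv> {P ! k | k. i1 \<le> k \<and> k < i3}" and "Y3 \<equiv> {P ! k | k. i3 \<le> k \<and> k < i4}"
    and "E0 \<equiv> del_edges (E - {{v2, x}}) S"
  shows "Y2 \<subseteq> C \<union> {v1}" "Y3 \<subseteq> C" "v1 \<in> Y2" "v3 \<in> Y3" "Y2 \<inter> Y3 = {}"
    and "connected_in E0 Y2" "connected_in E0 Y3"
    and "\<exists>a\<in>Y2. \<exists>b\<in>Y3. {a, b} \<in> E0" "\<exists>a\<in>Y3. {a, v4} \<in> E0"
proof -
  have "P ! k \<in> C \<union> {v1}" if "i1 \<le> k" "k < i3" for k
    using that path_in_C P1 i34 by (cases "k = i1") auto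
  then show "Y2 \<subseteq> C \<union> {v1}" unfolding Y2_def by blast
  show "Y3 \<subseteq> C" unfolding Y3_def using path_in_C i12 i23 by force
  show "v1 \<in> Y2" unfolding Y2_def using P1 i12 i23 by (intro CollectI exI[of _ i1]) simp
  show "v3 \<in> Y3" unfolding Y3_def using P3 i34 by (intro CollectI exI[of _ i3]) simp
  show "Y2 \<inter> Y3 = {}" unfolding Y2_def Y3_def using path_segments_disjoint i4_len by simp
  show "connected_in E0 Y2" "connected_in E0 Y3" unfolding Y2_def Y3_def E0_def
    using i12 i23 i34 by (auto intro!: path_segment_connected[OF SC v14S])
  have "P ! (i3 - 1) \<in> Y2" unfolding Y2_def using i12 i23 by (intro CollectI exI[of _ "i3 - 1"]) simp
  moreover have "{P ! (i3 - 1), P ! i3} \<in> E0"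
    using path_segment_edge[OF SC v14S, of "i3 - 1"] i12 i23 i34 unfolding E0_def by simp
  ultimately show "\<exists>a\<in>Y2. \<exists>b\<in>Y3. {a, b} \<in> E0" using \<open>v3 \<in> Y3\<close> P3 by blast
  have "P ! (i4 - 1) \<in> Y3" unfolding Y3_def using i34 by (intro CollectI exI[of _ "i4 - 1"]) simp
  moreover have "{P ! (i4 - 1), v4} \<in> E0"
    using path_segment_edge[OF SC v14S, of "i4 - 1"] i12 i23 i34 P4 unfolding E0_def by simp
  ultimately show "\<exists>a\<in>Y3. {a, v4} \<in> E0" by blast
qed

lemma v1_v4_separated:
  assumes sol: "solution V (E - {{v2, x}}) t S" and xS: "x \<notin> S" and SC: "S \<inter> C = {}"
    and r: "reach_in E (V - S - C - {x}) v1 v4"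
  shows False
proof -
  let ?W = "V - S" and ?D = "V - S - C - {x}" and ?E0 = "del_edges (E - {{v2, x}}) S"
  let ?Y2 = "{P ! k | k. i1 \<le> k \<and> k < i3}" and ?Y3 = "{P ! k | k. i3 \<le> k \<and> k < i4}"
  have v14S: "v1 \<notin> S" "v4 \<notin> S" using r unfolding reach_in_def by auto
  note Y23 = path_branch_sets[OF SC v14S]
  have E0I: "{a, b} \<in> ?E0" if "{a, b} \<in> E" "a \<in> ?W" "b \<in> ?W" "x \<notin> {a, b}" for a b
    using that unfolding del_edges_def by auto
  obtain c where c: "{v1, c} \<in> E" "c \<in> ?D - {v1}" "reach_in E (?D - {v1}) c v4"
    using reach_in_first_step[OF r v_distinct(3)] by blast
  define Y4 where "Y4 = {u. reach_in E (?D - {v1}) c u}"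
  have Y4: "Y4 \<subseteq> ?D - {v1}" "c \<in> Y4" "v4 \<in> Y4"
    using c(2,3) unfolding Y4_def reach_in_def by auto
  have "connected_in ?E0 Y4"
  proof (rule connected_in_mono)
    show "connected_in E Y4" unfolding Y4_def by (rule connected_in_reach_class)
    fix a b assume "{a, b} \<in> E" "a \<in> Y4" "b \<in> Y4"
    then show "{a, b} \<in> ?E0" using E0I Y4(1) by blast
  qed
  moreover have "connected_in ?E0 {x}" unfolding connected_in_def by (auto intro: reach_in_refl)
  moreover have "v3 \<notin> S" using v23_in_C(2) SC by blast
  then have "{x, v1} \<in> ?E0" "{x, v3} \<in> ?E0" "{x, v4} \<in> ?E0"
    using x_edges x_edges_remain x_in_V xS v_in_V v14S unfolding del_edges_def by auto
  moreover have "{v1, c} \<in> ?E0"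
    using E0I[OF c(1)] c(2) v_in_V(1) v14S(1) x_neq_v(1) by blast
  ultimately have con: "connected_in ?E0 {x}" "connected_in ?E0 ?Y2" "connected_in ?E0 ?Y3"
      "connected_in ?E0 Y4"
    and adj: "\<exists>a\<in>{x}. \<exists>b\<in>?Y2. {a, b} \<in> ?E0" "\<exists>a\<in>{x}. \<exists>b\<in>?Y3. {a, b} \<in> ?E0"
      "\<exists>a\<in>{x}. \<exists>b\<in>Y4. {a, b} \<in> ?E0" "\<exists>a\<in>?Y2. \<exists>b\<in>?Y3. {a, b} \<in> ?E0"
      "\<exists>a\<in>?Y2. \<exists>b\<in>Y4. {a, b} \<in> ?E0" "\<exists>a\<in>?Y3. \<exists>b\<in>Y4. {a, b} \<in> ?E0"
    using Y23(3,4,6-9) Y4(2,3) by blast+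
  have tw: "tw_le ?W ?E0 2" using sol unfolding solution_def by simp
  have sub: "{x} \<subseteq> ?W" "?Y2 \<subseteq> ?W" "?Y3 \<subseteq> ?W" "Y4 \<subseteq> ?W"
    using Y23(1,2) Y4(1) x_in_V xS C_subset SC v_in_V(1) v14S(1) by auto
  have ne: "{x} \<noteq> {}" "?Y2 \<noteq> {}" "?Y3 \<noteq> {}" "Y4 \<noteq> {}" using Y23(3,4) Y4(2) by auto
  have dis: "{x} \<inter> ?Y2 = {}" "{x} \<inter> ?Y3 = {}" "{x} \<inter> Y4 = {}" "?Y2 \<inter> ?Y3 = {}" "?Y2 \<inter> Y4 = {}"
    "?Y3 \<inter> Y4 = {}"
    using Y23(1,2,5) Y4(1) C_disjoint(4) x_neq_v(1) by auto
  show False using finite_V by (intro tw_le_2_no_K4_minor[OF tw _ sub ne con dis adj]) simp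
qed

definition v1_side :: "'a set \<Rightarrow> 'a set" where
  "v1_side S = {u. reach_in E (V - S - C - {x}) v1 u}"

lemma v1_sideD:
  assumes "solution V (E - {{v2, x}}) t S" "x \<notin> S" "S \<inter> C = {}"
  shows "v1_side S \<subseteq> V - S - C - {x}" "v4 \<notin> v1_side S" "v1 \<notin> S \<Longrightarrow> v1 \<in> v1_side S"
  using v1_v4_separated[OF assms] C_disjoint v_in_V x_neq_v
  unfolding v1_side_def reach_in_def by (auto intro: rtrancl.rtrancl_refl)

lemma edge_avoiding_solution_cases:
  assumes sol: "solution V (E - {{v2, x}}) t S" and xS: "x \<notin> S" and "e \<in> E" "e \<inter> S = {}"
  shows "e \<subseteq> C \<union> {x} \<union> ({v1, v4} - S) \<or> e \<subseteq> insert x (v1_side S) \<or> e \<subseteq> V - S - C - v1_side S"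
proof -
  have eW: "e \<subseteq> V - S" using edge_subset assms(3,4) by blast
  consider c where "c \<in> e" "c \<in> C" | d where "e \<inter> C = {}" "d \<in> e" "d \<in> v1_side S"
    | "e \<inter> C = {}" "e \<inter> v1_side S = {}" by blast
  then show ?thesis
  proof cases
    case (1 c)
    then show ?thesis using edge_meeting_C[OF sol xS \<open>e \<in> E\<close>] eW by blast
  next
    case (2 d)
    have "u \<in> insert x (v1_side S)" if "u \<in> e" for u
    proof -
      obtain a b where "e = {a, b}" using graph_edgeE[OF graph \<open>e \<in> E\<close>] by blast
      then have "u = d \<or> {d, u} \<in> E" using \<open>e \<in> E\<close> \<open>d \<in> e\<close> \<open>u \<in> e\<close> by (auto simp: insert_commute)
      moreover have "u \<in> V - S - C - {x} \<or> u = x" using eW 2(1) \<open>u \<in> e\<close> by blast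
      ultimately show ?thesis using reach_class_closed[of d u] 2(3) unfolding v1_side_def by blast
    qed
    then show ?thesis by blast
  qed (use eW in blast)
qed

lemma solution_keeps_v2x:
  assumes sol: "solution V (E - {{v2, x}}) t S" and xS: "x \<notin> S" and SC: "S \<inter> C = {}"
  shows "solution V E t S"
proof -
  define A where "A = C \<union> {x} \<union> ({v1, v4} - S)"
  define B1 where "B1 = insert x (v1_side S)"
  define B2 where "B2 = V - S - C - v1_side S"
  note side = v1_sideD[OF sol xS SC]
  have "tw_le (V - (X - {x})) (del_edges E (X - {x})) 2"
    using tidy x_in_X unfolding tidy_modulator_def by blast
  then have twA: "tw_le A {e\<in>E. e \<subseteq> A} 2"
    by (rule tw_le_subgraph)
      (use C_subset x_in_V v_in_V v_notin_X finite_V in \<open>auto simp: A_def del_edges_def\<close>)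
  have "v2 \<notin> B1" "v2 \<notin> B2" using side(1) v23_in_C(1) x_neq_v(2) unfolding B1_def B2_def by auto
  then have twB1: "tw_le B1 {e\<in>E. e \<subseteq> B1} 2" and twB2: "tw_le B2 {e\<in>E. e \<subseteq> B2} 2"
    using side(1) x_in_V xS
    by (auto intro!: solution_induced_tw_le[OF finite_V sol] simp: B1_def B2_def)
  have AB1: "A \<inter> B1 \<subseteq> {x, v1}" using side(1,2) unfolding A_def B1_def by auto
  have AB2: "(A \<union> B1) \<inter> B2 \<subseteq> {x, v4}" and AB2A: "(A \<union> B1) \<inter> B2 \<subseteq> A"
    using side C_disjoint unfolding A_def B1_def B2_def by auto
  have parts: "e \<subseteq> A \<or> e \<subseteq> B1 \<or> e \<subseteq> B2" if "e \<in> E" "e \<inter> S = {}" for e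
    using edge_avoiding_solution_cases[OF sol xS that] unfolding A_def B1_def B2_def by blast
  have "tw_le (A \<union> B1) {e\<in>E. e \<subseteq> A \<union> B1} 2"
  proof (rule tw_le_glue_induced[OF twA twB1 AB1 x_edges(1)])
    have "e \<subseteq> A \<or> e \<subseteq> B1" if "e \<in> E" "e \<subseteq> A \<union> B1" for e
    proof -
      have "e \<inter> S = {}" using that(2) side(1) SC xS unfolding A_def B1_def by blast
      then show ?thesis using parts[OF that(1)] that(2) AB2A by blast
    qed
    then show "\<forall>e\<in>{e\<in>E. e \<subseteq> A \<union> B1}. e \<subseteq> A \<or> e \<subseteq> B1" by blast
  qed auto
  then have "tw_le (A \<union> B1 \<union> B2) (del_edges E S) 2"
  proof (rule tw_le_glue_induced[OF _ twB2 AB2 x_edges(4)])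
    show "\<forall>e\<in>del_edges E S. e \<subseteq> A \<union> B1 \<or> e \<subseteq> B2"
      using parts unfolding del_edges_def by blast
  qed (auto simp: del_edges_def)
  moreover have "A \<union> B1 \<union> B2 = V - S"
    using C_subset SC side(1) x_in_V xS v_in_V unfolding A_def B1_def B2_def by auto
  ultimately show ?thesis using sol unfolding solution_def by simp
qed

lemma solution_iff: "(\<exists>S. solution V E t S) \<longleftrightarrow> (\<exists>S. solution V (E - {{v2, x}}) t S)"
proof
  assume "\<exists>S. solution V E t S"
  then show "\<exists>S. solution V (E - {{v2, x}}) t S"
    using solution_edge_subset[OF finite_V] by blast
next
  assume "\<exists>S. solution V (E - {{v2, x}}) t S"
  then obtain S where sol: "solution V (E - {{v2, x}}) t S" by blast
  consider "x \<in> S" | "x \<notin> S" "S \<inter> C \<noteq> {}" | "x \<notin> S" "S \<inter> C = {}" by blast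
  then show "\<exists>S. solution V E t S"
  proof cases
    case 1
    then show ?thesis using solution_delete_hit_edge[OF sol] by blast
  next
    case 2
    then show ?thesis using solution_exchange_C_for_x[OF sol] by blast
  next
    case 3
    then show ?thesis using solution_keeps_v2x[OF sol] by blast
  qed
qed

end


theorem mainTheorem12:
  fixes V :: "'a set" and E :: "'a set set" and t :: nat and X :: "'a set" and x :: 'a
    and P :: "'a list" and i1 i2 i3 i4 :: nat and v1 v2 v3 v4 :: 'a and C :: "'a set"
  assumes "graph V E"
    and "tidy_modulator V E X"
    and "x \<in> X"
    and "simple_path (V - X) (del_edges E X) P"
    and "i1 < i2" and "i2 < i3" and "i3 < i4" and "i4 < length P"
    and "P ! i1 = v1" and "P ! i2 = v2" and "P ! i3 = v3" and "P ! i4 = v4"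
    and "{v1, v2, v3, v4} \<subseteq> nbhd V E {x}"
    and "component (V - (X \<union> {v1, v4})) (del_edges E (X \<union> {v1, v4})) C"
    and "\<forall>k. i1 < k \<and> k < i4 \<longrightarrow> P ! k \<in> C"
    and "limit1 V (E - {{v2, x}}) t (nbhd V E C \<inter> X)"
  shows "(\<exists>S. solution V E t S) \<longleftrightarrow> (\<exists>S. solution V (E - {{v2, x}}) t S)"
proof -
  interpret redundant_edge V E t X x P i1 i2 i3 i4 v1 v2 v3 v4 C
    using assms by unfold_locales
  show ?thesis by (rule solution_iff)
qed

end
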